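(* Let $n\in\mathbb N$, $\psi_1,\dots,\psi_n\in\bar P_0\mathcal H$ and $E_1,\dots,E_n\in\mathbb C$ be such that $E_1=\langle\psi_0,V\psi_0\rangle$, for all $2\le m\le n$ $$E_m=-\sum_{k=2}^{m}\sum_{\substack{j_1+\dots+j_k=m\\ j_s\ge1}}\Big\langle\psi_0,(E_{j_1}-\delta_{1j_1}V)\prod_{s=2}^{k}\Big\{(H_0-E_0)^{-1}\bar P_0(E_{j_s}-\delta_{1j_s}V)\Big\}\psi_0\Big\rangle,$$ and for all $1\le m\le n$ $$\psi_m=\sum_{k=1}^{m}\sum_{\substack{j_1+\dots+j_k=m\\ j_s\ge1}}\prod_{s=1}^{k}\Big\{(H_0-E_0)^{-1}\bar P_0(E_{j_s}-\delta_{1j_s}V)\Big\}\psi_0,$$ where it is assumed that all expressions on the right-hand sides are well defined (every vector to which $V$ is applied lies in ${\rm dom}(V)$, every vector to which $(H_0-E_0)^{-1}\bar P_0$ is applied lies in its domain). Then for all $m\in\{1,\dots,n\}$ $$H_0\psi_m+V\psi_{m-1}=\sum_{k=0}^{m}E_k\psi_{m-k}.$$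
   Context: Let $H_0$ and $V$ be self-adjoint operators in a Hilbert space $\mathcal H$ with $V$ $H_0$-bounded, and let $\psi_0$ be a normalized vector with $H_0\psi_0=E_0\psi_0$ and $\ker(H_0-E_0)=\mathbb C\psi_0$. $P_0$ is the orthogonal projection onto $\mathbb C\psi_0$, $\bar P_0=1-P_0$. The operator $(H_0-E_0)^{-1}\bar P_0$ maps a vector $\xi$ to the unique $\chi\in{\rm dom}(H_0)\cap\bar P_0\mathcal H$ with $(H_0-E_0)\chi=\bar P_0\xi$; its domain consists of those $\xi$ for which such $\chi$ exists. $\delta_{ij}$ is the Kronecker delta. *)

theory Defs
  imports Complex_Main
begin

text \<open>HOL has no complex inner product spaces, so we introduce them as a type class:
  an abelian group with complex scalar multiplication and a complex inner product
  (linear in the second, conjugate-linear in the first argument, physics convention),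
  complete w.r.t. the induced norm.\<close>

class complex_hilbert = ab_group_add +
  fixes hscale :: "complex \<Rightarrow> 'a \<Rightarrow> 'a"
    and hinner :: "'a \<Rightarrow> 'a \<Rightarrow> complex"
  assumes hscale_add_right: "hscale c (x + y) = hscale c x + hscale c y"
    and hscale_add_left: "hscale (a + b) x = hscale a x + hscale b x"
    and hscale_hscale: "hscale a (hscale b x) = hscale (a * b) x"
    and hscale_one: "hscale 1 x = x"
    and hinner_add_right: "hinner x (y + z) = hinner x y + hinner x z"
    and hinner_hscale_right: "hinner x (hscale c y) = c * hinner x y"
    and hinner_conj: "hinner y x = cnj (hinner x y)"
    and hinner_nonneg: "0 \<le> Re (hinner x x)"
    and hinner_definite: "hinner x x = 0 \<Longrightarrow> x = 0"
    and hcomplete: "(\<forall>e>(0::real). \<exists>N::nat. \<forall>p\<ge>N. \<forall>q\<ge>N. Re (hinner (X p - X q) (X p - X q)) < e)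
        \<Longrightarrow> (\<exists>L. \<forall>e>0. \<exists>N::nat. \<forall>p\<ge>N. Re (hinner (X p - L) (X p - L)) < e)"

definition hnorm :: "'a::complex_hilbert \<Rightarrow> real" where
  "hnorm x = sqrt (Re (hinner x x))"

definition lin_op :: "'a::complex_hilbert set \<Rightarrow> ('a \<Rightarrow> 'a) \<Rightarrow> bool" where
  "lin_op D A \<longleftrightarrow> 0 \<in> D \<and>
     (\<forall>x\<in>D. \<forall>y\<in>D. x + y \<in> D \<and> A (x + y) = A x + A y) \<and>
     (\<forall>c. \<forall>x\<in>D. hscale c x \<in> D \<and> A (hscale c x) = hscale c (A x))"

definition dense_set :: "'a::complex_hilbert set \<Rightarrow> bool" where
  "dense_set D \<longleftrightarrow> (\<forall>x. \<forall>e>0. \<exists>d\<in>D. hnorm (x - d) < e)"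

definition adj_domain :: "'a::complex_hilbert set \<Rightarrow> ('a \<Rightarrow> 'a) \<Rightarrow> 'a set" where
  "adj_domain D A = {y. \<exists>z. \<forall>x\<in>D. hinner (A x) y = hinner x z}"

definition self_adjoint :: "'a::complex_hilbert set \<Rightarrow> ('a \<Rightarrow> 'a) \<Rightarrow> bool" where
  "self_adjoint D A \<longleftrightarrow> lin_op D A \<and> dense_set D \<and> adj_domain D A = D \<and>
     (\<forall>x\<in>D. \<forall>y\<in>D. hinner (A x) y = hinner x (A y))"

definition rel_bounded :: "'a::complex_hilbert set \<Rightarrow> ('a \<Rightarrow> 'a) \<Rightarrow> 'a set \<Rightarrow> ('a \<Rightarrow> 'a) \<Rightarrow> bool" where
  "rel_bounded DA A DB B \<longleftrightarrow> DA \<subseteq> DB \<and>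
     (\<exists>a b. 0 \<le> a \<and> 0 \<le> b \<and> (\<forall>x\<in>DA. hnorm (B x) \<le> a * hnorm (A x) + b * hnorm x))"

definition proj0 :: "'a::complex_hilbert \<Rightarrow> 'a \<Rightarrow> 'a" where
  "proj0 \<psi>0 x = hscale (hinner \<psi>0 x) \<psi>0"

definition projc :: "'a::complex_hilbert \<Rightarrow> 'a \<Rightarrow> 'a" where
  "projc \<psi>0 x = x - proj0 \<psi>0 x"

definition red_res_rel :: "'a::complex_hilbert set \<Rightarrow> ('a \<Rightarrow> 'a) \<Rightarrow> complex \<Rightarrow> 'a \<Rightarrow> 'a \<Rightarrow> 'a \<Rightarrow> bool" where
  "red_res_rel D0 h0 E0 \<psi>0 \<xi> \<chi> \<longleftrightarrow>
     \<chi> \<in> D0 \<and> proj0 \<psi>0 \<chi> = 0 \<and> h0 \<chi> - hscale E0 \<chi> = projc \<psi>0 \<xi>"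

definition red_res_dom :: "'a::complex_hilbert set \<Rightarrow> ('a \<Rightarrow> 'a) \<Rightarrow> complex \<Rightarrow> 'a \<Rightarrow> 'a set" where
  "red_res_dom D0 h0 E0 \<psi>0 = {\<xi>. \<exists>\<chi>. red_res_rel D0 h0 E0 \<psi>0 \<xi> \<chi>}"

text \<open>(H0 - E0)^{-1} Pbar0 applied to xi (the unique solution, on its domain).\<close>
definition red_res :: "'a::complex_hilbert set \<Rightarrow> ('a \<Rightarrow> 'a) \<Rightarrow> complex \<Rightarrow> 'a \<Rightarrow> 'a \<Rightarrow> 'a" where
  "red_res D0 h0 E0 \<psi>0 \<xi> = (THE \<chi>. red_res_rel D0 h0 E0 \<psi>0 \<xi> \<chi>)"

definition fac :: "('a::complex_hilbert \<Rightarrow> 'a) \<Rightarrow> (nat \<Rightarrow> complex) \<Rightarrow> nat \<Rightarrow> 'a \<Rightarrow> 'a" where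
  "fac v E j y = hscale (E j) y - (if j = 1 then v y else 0)"

text \<open>prod_fac [j1,...,jk] x = R(E_j1 - d V) ... R(E_jk - d V) x, leftmost factor applied last;
  E 0 is the eigenvalue E0.\<close>
primrec prod_fac :: "'a::complex_hilbert set \<Rightarrow> ('a \<Rightarrow> 'a) \<Rightarrow> ('a \<Rightarrow> 'a) \<Rightarrow> (nat \<Rightarrow> complex) \<Rightarrow> 'a
    \<Rightarrow> nat list \<Rightarrow> 'a \<Rightarrow> 'a" where
  "prod_fac D0 h0 v E \<psi>0 [] x = x"
| "prod_fac D0 h0 v E \<psi>0 (j # js) x =
     red_res D0 h0 (E 0) \<psi>0 (fac v E j (prod_fac D0 h0 v E \<psi>0 js x))"

primrec prod_wd :: "'a::complex_hilbert set \<Rightarrow> ('a \<Rightarrow> 'a) \<Rightarrow> 'a set \<Rightarrow> ('a \<Rightarrow> 'a) \<Rightarrow> (nat \<Rightarrow> complex)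
    \<Rightarrow> 'a \<Rightarrow> nat list \<Rightarrow> 'a \<Rightarrow> bool" where
  "prod_wd D0 h0 DV v E \<psi>0 [] x = True"
| "prod_wd D0 h0 DV v E \<psi>0 (j # js) x =
     (prod_wd D0 h0 DV v E \<psi>0 js x \<and>
      (j = 1 \<longrightarrow> prod_fac D0 h0 v E \<psi>0 js x \<in> DV) \<and>
      fac v E j (prod_fac D0 h0 v E \<psi>0 js x) \<in> red_res_dom D0 h0 (E 0) \<psi>0)"

definition compositions :: "nat \<Rightarrow> nat \<Rightarrow> nat list set" where
  "compositions m k = {js. length js = k \<and> (\<forall>j\<in>set js. 1 \<le> j) \<and> sum_list js = m}"

end

theory Submission
  imports Defs
begin

text \<open>Splitting each composition of \<open>m\<close> at its first part \<open>j\<close> shows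
  \<open>\<psi>\<^sub>m = \<Sum>\<^sub>j R\<^sub>0 F\<^sub>j \<psi>\<^sub>m\<^sub>-\<^sub>j\<close>, where \<open>R\<^sub>0 = (H\<^sub>0 - E\<^sub>0)\<^sup>-\<^sup>1 P\<^sub>0\<^sup>\<bottom>\<close> and
  \<open>F\<^sub>j = E\<^sub>j - \<delta>\<^sub>1\<^sub>j V\<close>; hence
  \<open>(H\<^sub>0 - E\<^sub>0) \<psi>\<^sub>m = P\<^sub>0\<^sup>\<bottom> \<Sum>\<^sub>j F\<^sub>j \<psi>\<^sub>m\<^sub>-\<^sub>j = P\<^sub>0\<^sup>\<bottom> (\<Sum>\<^sub>j E\<^sub>j \<psi>\<^sub>m\<^sub>-\<^sub>j - V \<psi>\<^sub>m\<^sub>-\<^sub>1)\<close>.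
  The projection can be dropped because \<open>\<langle>\<psi>\<^sub>0, \<Sum>\<^sub>j F\<^sub>j \<psi>\<^sub>m\<^sub>-\<^sub>j\<rangle> = 0\<close>: splitting the
  compositions in the formula for \<open>E\<^sub>m\<close> the same way, this sum is \<open>-E\<^sub>m\<close> plus the
  contribution \<open>\<langle>\<psi>\<^sub>0, F\<^sub>m \<psi>\<^sub>0\<rangle> = E\<^sub>m\<close> of the one-part composition \<open>[m]\<close>.\<close>

interpretation hm: module "hscale :: complex \<Rightarrow> 'a::complex_hilbert \<Rightarrow> 'a"
  by unfold_locales (auto simp: hscale_add_right hscale_add_left hscale_hscale hscale_one)

lemma hinner_zero_right [simp]: "hinner x 0 = 0"
  using hinner_add_right[of x 0 0] by simp

lemma hinner_diff_right: "hinner x (y - z) = hinner x y - hinner x z"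
  using hinner_add_right[of x y "- z"] hinner_hscale_right[of x "- 1" z] by simp

lemma hinner_sum_right: "hinner x (sum f A) = (\<Sum>a\<in>A. hinner x (f a))"
  by (induction A rule: infinite_finite_induct) (auto simp: hinner_add_right)

lemma hinner_self_eq_1: "hnorm x = 1 \<Longrightarrow> hinner x x = 1"
  using hinner_conj[of x x] unfolding hnorm_def by (simp add: complex_eq_iff)

lemma proj0_hscale_self: "hinner p p = 1 \<Longrightarrow> proj0 p (hscale c p) = hscale c p"
  by (simp add: proj0_def hinner_hscale_right)

lemma proj0_diff: "proj0 p (x - y) = proj0 p x - proj0 p y"
  by (simp add: proj0_def hinner_diff_right hm.scale_left_diff_distrib)

lemma projc_eq_self: "hinner p x = 0 \<Longrightarrow> projc p x = x"
  by (simp add: projc_def proj0_def)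

lemma projc_sum: "projc p (sum f A) = (\<Sum>a\<in>A. projc p (f a))"
  by (induction A rule: infinite_finite_induct)
    (auto simp: projc_def proj0_def hinner_add_right hscale_add_left)

lemma lin_op_zero: "lin_op D A \<Longrightarrow> A 0 = 0"
  unfolding lin_op_def by (metis hm.scale_zero_left)

lemma lin_op_diff:
  assumes "lin_op D A" "x \<in> D" "y \<in> D"
  shows "x - y \<in> D" "A (x - y) = A x - A y"
proof -
  have "- y \<in> D" "A (- y) = - A y"
    using assms hm.scale_minus_left[of 1] unfolding lin_op_def by (metis hscale_one)+
  with assms show "x - y \<in> D" "A (x - y) = A x - A y"
    unfolding lin_op_def by (metis diff_conv_add_uminus)+
qed

lemma lin_op_sum:
  assumes "lin_op D A" "\<forall>x\<in>S. f x \<in> D"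
  shows "sum f S \<in> D \<and> A (sum f S) = (\<Sum>x\<in>S. A (f x))"
  using assms(2)
proof (induction S rule: infinite_finite_induct)
  case (insert x F)
  then show ?case using assms(1) unfolding lin_op_def by auto
qed (use assms(1) lin_op_zero in \<open>auto simp: lin_op_def\<close>)

context
  fixes D0 :: "'a::complex_hilbert set" and h0 :: "'a \<Rightarrow> 'a" and E0 :: complex and p :: 'a
  assumes lin_h0: "lin_op D0 h0"
    and kernel: "{x \<in> D0. h0 x = hscale E0 x} \<subseteq> {hscale c p | c. True}"
    and p_normal: "hinner p p = 1"
begin

lemma red_res_rel_unique:
  assumes "red_res_rel D0 h0 E0 p \<xi> a" "red_res_rel D0 h0 E0 p \<xi> b"
  shows "a = b"
proof -
  have "a - b \<in> D0" "h0 (a - b) = hscale E0 (a - b)"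
    using assms lin_op_diff[OF lin_h0, of a b]
    by (auto simp: red_res_rel_def hm.scale_right_diff_distrib algebra_simps)
  then obtain c where c: "a - b = hscale c p"
    using kernel by auto
  have "a - b = proj0 p (a - b)"
    using c proj0_hscale_self[OF p_normal] by simp
  also have "\<dots> = 0"
    using assms by (simp add: red_res_rel_def proj0_diff)
  finally show ?thesis by simp
qed

lemma red_res_rel_red_res:
  "\<xi> \<in> red_res_dom D0 h0 E0 p \<Longrightarrow> red_res_rel D0 h0 E0 p \<xi> (red_res D0 h0 E0 p \<xi>)"
  unfolding red_res_dom_def red_res_def using red_res_rel_unique by (blast intro: theI)

end

lemma prod_fac_Cons:
  assumes "lin_op D0 h0" "{x \<in> D0. h0 x = hscale (E 0) x} \<subseteq> {hscale c p | c. True}"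
    "hinner p p = 1" "prod_wd D0 h0 DV v E p (j # js) x"
  shows "prod_fac D0 h0 v E p (j # js) x \<in> D0"
    and "h0 (prod_fac D0 h0 v E p (j # js) x)
      = hscale (E 0) (prod_fac D0 h0 v E p (j # js) x) + projc p (fac v E j (prod_fac D0 h0 v E p js x))"
proof -
  let ?\<chi> = "prod_fac D0 h0 v E p (j # js) x"
  have "fac v E j (prod_fac D0 h0 v E p js x) \<in> red_res_dom D0 h0 (E 0) p"
    using assms(4) by simp
  then have "red_res_rel D0 h0 (E 0) p (fac v E j (prod_fac D0 h0 v E p js x)) ?\<chi>"
    using red_res_rel_red_res[OF assms(1-3)] by simp
  then show "?\<chi> \<in> D0" and "h0 ?\<chi> = hscale (E 0) ?\<chi> + projc p (fac v E j (prod_fac D0 h0 v E p js x))"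
    unfolding red_res_rel_def by (simp_all add: diff_eq_eq add.commute)
qed

definition all_compositions :: "nat \<Rightarrow> nat list set" where
  "all_compositions m = {js. (\<forall>j\<in>set js. 1 \<le> j) \<and> sum_list js = m}"

lemma compositions_conv: "compositions m k = {js \<in> all_compositions m. length js = k}"
  by (auto simp: compositions_def all_compositions_def)

lemma length_le_sum_list: "\<forall>j\<in>set js. 1 \<le> j \<Longrightarrow> length js \<le> sum_list (js :: nat list)"
  by (induction js) auto

lemma finite_all_compositions: "finite (all_compositions m)"
proof (rule finite_subset)
  show "all_compositions m \<subseteq> {js. set js \<subseteq> {1..m} \<and> length js \<le> m}"
  proof
    fix js assume "js \<in> all_compositions m"
    then have pos: "\<forall>j\<in>set js. 1 \<le> j" and sum: "sum_list js = m"
      by (simp_all add: all_compositions_def)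
    then show "js \<in> {js. set js \<subseteq> {1..m} \<and> length js \<le> m}"
      using length_le_sum_list[OF pos] member_le_sum_list[of _ js] by auto
  qed
qed (simp add: finite_lists_length_le)

lemma all_compositions_0: "all_compositions 0 = {[]}"
proof -
  have "js = []" if "js \<in> all_compositions 0" for js
    using that length_le_sum_list[of js] unfolding all_compositions_def
    by (simp del: sum_list_eq_0_iff)
  then show ?thesis
    by (auto simp: all_compositions_def)
qed

lemma length_all_compositions:
  "js \<in> all_compositions m \<Longrightarrow> 1 \<le> m \<Longrightarrow> length js \<in> {1..m}"
  using length_le_sum_list[of js] by (cases js) (auto simp: all_compositions_def)

lemma Cons_in_all_compositions:
  "j # js \<in> all_compositions m \<longleftrightarrow> j \<in> {1..m} \<and> js \<in> all_compositions (m - j)"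
  by (auto simp: all_compositions_def)

lemma sum_compositions_conv:
  "finite K \<Longrightarrow> (\<Sum>k\<in>K. \<Sum>js\<in>compositions m k. f js)
    = (\<Sum>js\<in>all_compositions m. if length js \<in> K then f js else 0)"
proof -
  assume "finite K"
  have "(\<Sum>k\<in>K. \<Sum>js\<in>compositions m k. f js)
      = (\<Sum>k\<in>K. \<Sum>js\<in>all_compositions m. if length js = k then f js else 0)"
    by (simp add: compositions_conv sum.inter_filter[OF finite_all_compositions])
  also have "\<dots> = (\<Sum>js\<in>all_compositions m. \<Sum>k\<in>K. if length js = k then f js else 0)"
    by (rule sum.swap)
  finally show ?thesis
    using \<open>finite K\<close> by simp
qed

lemma sum_all_compositions_Cons:
  assumes "1 \<le> m"
  shows "(\<Sum>js\<in>all_compositions m. f js) = (\<Sum>j=1..m. \<Sum>js\<in>all_compositions (m - j). f (j # js))"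
proof -
  have split: "all_compositions m = (\<Union>j\<in>{1..m}. (#) j ` all_compositions (m - j))"
  proof (intro set_eqI iffI)
    fix js assume "js \<in> all_compositions m"
    with assms have "js \<noteq> []"
      using length_all_compositions by fastforce
    then obtain j js' where "js = j # js'"
      by (cases js) auto
    with \<open>js \<in> all_compositions m\<close> show "js \<in> (\<Union>j\<in>{1..m}. (#) j ` all_compositions (m - j))"
      by (auto simp: Cons_in_all_compositions)
  qed (auto simp: Cons_in_all_compositions)
  have "(\<Sum>js\<in>all_compositions m. f js)
      = (\<Sum>j\<in>{1..m}. \<Sum>js\<in>(#) j ` all_compositions (m - j). f js)"
    unfolding split by (rule sum.UNION_disjoint) (auto simp: finite_all_compositions)
  then show ?thesis
    by (simp add: sum.reindex)
qed

locale rs_expansion =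
  fixes D0 :: "'a::complex_hilbert set" and h0 :: "'a \<Rightarrow> 'a" and DV :: "'a set" and v :: "'a \<Rightarrow> 'a"
    and E :: "nat \<Rightarrow> complex" and \<psi> :: "nat \<Rightarrow> 'a" and n :: nat
  assumes lin_h0: "lin_op D0 h0"
    and lin_v: "lin_op DV v"
    and kernel: "{x \<in> D0. h0 x = hscale (E 0) x} \<subseteq> {hscale c (\<psi> 0) | c. True}"
    and psi0_normal: "hinner (\<psi> 0) (\<psi> 0) = 1"
    and well_defined: "\<And>m js. m \<in> {1..n} \<Longrightarrow> js \<in> all_compositions m \<Longrightarrow>
      prod_wd D0 h0 DV v E (\<psi> 0) js (\<psi> 0)"
    and psi_expansion: "\<And>m. m \<in> {1..n} \<Longrightarrow>
      \<psi> m = (\<Sum>js\<in>all_compositions m. prod_fac D0 h0 v E (\<psi> 0) js (\<psi> 0))"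
begin

abbreviation rs_term :: "nat list \<Rightarrow> 'a" where
  "rs_term js \<equiv> prod_fac D0 h0 v E (\<psi> 0) js (\<psi> 0)"

lemma psi_eq_sum: "i \<le> n \<Longrightarrow> \<psi> i = (\<Sum>js\<in>all_compositions i. rs_term js)"
proof (cases "i = 0")
  case False
  then show "i \<le> n \<Longrightarrow> ?thesis"
    by (intro psi_expansion) simp
qed (simp add: all_compositions_0)

lemma rs_term_Cons:
  assumes "m \<in> {1..n}" "j # js \<in> all_compositions m"
  shows "rs_term (j # js) \<in> D0"
    and "h0 (rs_term (j # js)) = hscale (E 0) (rs_term (j # js)) + projc (\<psi> 0) (fac v E j (rs_term js))"
  using prod_fac_Cons[OF lin_h0 kernel psi0_normal well_defined[OF assms]] by simp_all

lemma sum_fac_rs_term: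
  assumes m: "m \<in> {1..n}" and j: "j \<in> {1..m}"
  shows "(\<Sum>js\<in>all_compositions (m - j). fac v E j (rs_term js)) = fac v E j (\<psi> (m - j))"
proof -
  have psi: "\<psi> (m - j) = (\<Sum>js\<in>all_compositions (m - j). rs_term js)"
    using m by (intro psi_eq_sum) auto
  have "\<forall>js\<in>all_compositions (m - j). rs_term js \<in> DV" if "j = 1"
    using well_defined[OF m, of "1 # _"] that j by (auto simp: Cons_in_all_compositions)
  then show ?thesis
    using lin_op_sum[OF lin_v, of "all_compositions (m - j)" rs_term]
    by (auto simp: psi fac_def sum_subtractf hm.scale_sum_right)
qed

lemma h0_psi:
  assumes m: "m \<in> {1..n}"
  shows "h0 (\<psi> m) = hscale (E 0) (\<psi> m) + projc (\<psi> 0) (\<Sum>j=1..m. fac v E j (\<psi> (m - j)))"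
proof -
  have split: "(\<Sum>js\<in>all_compositions m. g js) = (\<Sum>j=1..m. \<Sum>js\<in>all_compositions (m - j). g (j # js))"
    for g :: "nat list \<Rightarrow> 'a"
    using m by (intro sum_all_compositions_Cons) auto
  have D0: "\<forall>js\<in>all_compositions m. rs_term js \<in> D0"
  proof
    fix js assume js: "js \<in> all_compositions m"
    with m have "js \<noteq> []"
      using length_all_compositions by fastforce
    with js show "rs_term js \<in> D0"
      using rs_term_Cons(1)[OF m] by (cases js) auto
  qed
  have "h0 (\<psi> m) = (\<Sum>js\<in>all_compositions m. h0 (rs_term js))"
    using lin_op_sum[OF lin_h0 D0] psi_expansion[OF m] by simp
  also have "\<dots> = (\<Sum>j=1..m. \<Sum>js\<in>all_compositions (m - j).
      hscale (E 0) (rs_term (j # js)) + projc (\<psi> 0) (fac v E j (rs_term js)))"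
    unfolding split using rs_term_Cons(2)[OF m]
    by (intro sum.cong refl) (simp add: Cons_in_all_compositions)
  also have "\<dots> = hscale (E 0) (\<Sum>js\<in>all_compositions m. rs_term js)
      + projc (\<psi> 0) (\<Sum>j=1..m. \<Sum>js\<in>all_compositions (m - j). fac v E j (rs_term js))"
    unfolding split by (simp add: sum.distrib hm.scale_sum_right projc_sum)
  also have "\<dots> = hscale (E 0) (\<psi> m) + projc (\<psi> 0) (\<Sum>j=1..m. fac v E j (\<psi> (m - j)))"
    using sum_fac_rs_term[OF m] psi_expansion[OF m] by simp
  finally show ?thesis .
qed

lemma hinner_sum_fac_psi_expand:
  assumes m: "m \<in> {1..n}"
  shows "hinner (\<psi> 0) (\<Sum>j=1..m. fac v E j (\<psi> (m - j)))
    = (\<Sum>js\<in>all_compositions m. hinner (\<psi> 0) (fac v E (hd js) (rs_term (tl js))))"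
proof -
  have "(\<Sum>js\<in>all_compositions m. hinner (\<psi> 0) (fac v E (hd js) (rs_term (tl js))))
      = (\<Sum>j=1..m. hinner (\<psi> 0) (\<Sum>js\<in>all_compositions (m - j). fac v E j (rs_term js)))"
    using m by (simp add: sum_all_compositions_Cons hinner_sum_right)
  also have "\<dots> = hinner (\<psi> 0) (\<Sum>j=1..m. fac v E j (\<psi> (m - j)))"
    using sum_fac_rs_term[OF m] by (simp add: hinner_sum_right)
  finally show ?thesis ..
qed

lemma orthogonal_sum_fac_psi:
  assumes E1: "E 1 = hinner (\<psi> 0) (v (\<psi> 0))"
    and Em: "\<forall>m\<in>{2..n}. E m = - (\<Sum>k=2..m. \<Sum>js\<in>compositions m k.
      hinner (\<psi> 0) (fac v E (hd js) (rs_term (tl js))))"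
    and m: "m \<in> {1..n}"
  shows "hinner (\<psi> 0) (\<Sum>j=1..m. fac v E j (\<psi> (m - j))) = 0"
proof (cases "m = 1")
  case True
  then show ?thesis
    using E1 psi0_normal by (simp add: fac_def hinner_diff_right hinner_hscale_right)
next
  case False
  define g where "g js = hinner (\<psi> 0) (fac v E (hd js) (rs_term (tl js)))" for js
  have one_part: "length js \<notin> {2..m} \<longleftrightarrow> js = [m]" if "js \<in> all_compositions m" for js
    using that m length_all_compositions[OF that]
    by (cases js rule: remdups_adj.cases) (auto simp: all_compositions_def)
  have "(\<Sum>js\<in>all_compositions m. g js)
      = (\<Sum>js\<in>all_compositions m. if length js \<in> {2..m} then g js else 0)
        + (\<Sum>js\<in>all_compositions m. if js = [m] then g js else 0)"
    unfolding sum.distrib[symmetric] using one_part by (intro sum.cong) auto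
  also have "\<dots> = - E m + g [m]"
  proof -
    have "m \<in> {2..n}" "[m] \<in> all_compositions m"
      using m False by (auto simp: all_compositions_def)
    then show ?thesis
      using Em unfolding g_def by (simp add: sum_compositions_conv finite_all_compositions)
  qed
  also have "g [m] = E m"
    using False psi0_normal by (simp add: g_def fac_def hinner_hscale_right)
  finally show ?thesis
    using hinner_sum_fac_psi_expand[OF m] by (simp add: g_def)
qed

lemma eigenvalue_equation:
  assumes m: "m \<in> {1..n}" and orth: "hinner (\<psi> 0) (\<Sum>j=1..m. fac v E j (\<psi> (m - j))) = 0"
  shows "h0 (\<psi> m) + v (\<psi> (m - 1)) = (\<Sum>k=0..m. hscale (E k) (\<psi> (m - k)))"
proof -
  have "(\<Sum>j=1..m. fac v E j (\<psi> (m - j))) = (\<Sum>j=1..m. hscale (E j) (\<psi> (m - j))) - v (\<psi> (m - 1))"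
    using m by (simp add: fac_def sum_subtractf)
  then show ?thesis
    using h0_psi[OF m] projc_eq_self[OF orth] by (simp add: sum.atLeast_Suc_atMost)
qed

end

theorem mainTheorem5:
  fixes D0 DV :: "'a::complex_hilbert set" and h0 v :: "'a \<Rightarrow> 'a"
    and \<psi> :: "nat \<Rightarrow> 'a" and E :: "nat \<Rightarrow> complex" and n :: nat
  assumes H0_sa: "self_adjoint D0 h0"
    and V_sa: "self_adjoint DV v"
    and V_bdd: "rel_bounded D0 h0 DV v"
    and psi0_dom: "\<psi> 0 \<in> D0"
    and psi0_norm: "hnorm (\<psi> 0) = 1"
    and psi0_eig: "h0 (\<psi> 0) = hscale (E 0) (\<psi> 0)"
    and kernel: "{x \<in> D0. h0 x = hscale (E 0) x} = {hscale c (\<psi> 0) | c. True}"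
    and psi_perp: "\<forall>m\<in>{1..n}. proj0 (\<psi> 0) (\<psi> m) = 0"
    and E1: "E 1 = hinner (\<psi> 0) (v (\<psi> 0))"
    and wd_E: "\<forall>m\<in>{2..n}. \<forall>k\<in>{2..m}. \<forall>j1 js. j1 # js \<in> compositions m k \<longrightarrow>
                 prod_wd D0 h0 DV v E (\<psi> 0) js (\<psi> 0) \<and>
                 (j1 = 1 \<longrightarrow> prod_fac D0 h0 v E (\<psi> 0) js (\<psi> 0) \<in> DV)"
    and wd_psi: "\<forall>m\<in>{1..n}. \<forall>k\<in>{1..m}. \<forall>js\<in>compositions m k.
                 prod_wd D0 h0 DV v E (\<psi> 0) js (\<psi> 0)"
    and Em: "\<forall>m\<in>{2..n}. E m = - (\<Sum>k=2..m. \<Sum>js\<in>compositions m k.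
                 hinner (\<psi> 0) (fac v E (hd js) (prod_fac D0 h0 v E (\<psi> 0) (tl js) (\<psi> 0))))"
    and psim: "\<forall>m\<in>{1..n}. \<psi> m = (\<Sum>k=1..m. \<Sum>js\<in>compositions m k.
                 prod_fac D0 h0 v E (\<psi> 0) js (\<psi> 0))"
  shows "\<forall>m\<in>{1..n}. h0 (\<psi> m) + v (\<psi> (m - 1)) = (\<Sum>k=0..m. hscale (E k) (\<psi> (m - k)))"
proof -
  have normal: "hinner (\<psi> 0) (\<psi> 0) = 1"
    using psi0_norm by (rule hinner_self_eq_1)
  interpret rs_expansion D0 h0 DV v E \<psi> n
  proof
    show "lin_op D0 h0" "lin_op DV v"
      using H0_sa V_sa by (simp_all add: self_adjoint_def)
    show "prod_wd D0 h0 DV v E (\<psi> 0) js (\<psi> 0)" if "m \<in> {1..n}" "js \<in> all_compositions m" for m js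
      using wd_psi[rule_format, OF that(1) length_all_compositions[OF that(2)]] that
      by (simp add: compositions_conv)
    show "\<psi> m = (\<Sum>js\<in>all_compositions m. prod_fac D0 h0 v E (\<psi> 0) js (\<psi> 0))" if "m \<in> {1..n}" for m
      using psim that length_all_compositions
      by (auto simp: sum_compositions_conv intro!: sum.cong)
  qed (use kernel normal in auto)
  show ?thesis
    using eigenvalue_equation orthogonal_sum_fac_psi[OF E1 Em] by blast
qed

end
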